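(* Let $d\ge 2$ and $1\le k\le d$. For $i=1,\dots,k-1$ let $\mathbf W_i\in\mathcal B_i$, and let $\mathbf W_k\in\mathcal B_k$. Put $w_1=(\mathbf W_1,\dots,\mathbf W_{k-1},\mathbf W_k,M_{k+1},\dots,M_d)$ and $w_2=(\mathbf W_1,\dots,\mathbf W_{k-1},M_k,M_{k+1},\dots,M_d)$. Then for all $x\in\mathcal X$, $$|h_{w_1}(x)-h_{w_2}(x)|_2\le \alpha_k\exp\Big(\sum_{i=1}^{k-1}\alpha_i\Big)\,M\,|x|_2 .$$
   Context: Let $m,\delta_1,\dots,\delta_d$ be positive integers, $\delta_0=m$, $R>0$, and $\mathcal X=\{x\in\mathbb R^m:|x|_2\le R\}$ ($|\cdot|_2$ the Euclidean norm). For $1\le j\le d$ fix a matrix $M_j\in\mathbb R^{\delta_j\times\delta_{j-1}}$ with $\|M_j\|_2>0$ ($\|\cdot\|_2$ the spectral norm) and a number $\alpha_j>0$, and let $\mathcal B_j=\{\mathbf W\in\mathbb R^{\delta_j\times\delta_{j-1}}:\|\mathbf W-M_j\|_2\le\alpha_j\|M_j\|_2\}$. Let $\phi$ be an activation (acting on vectors of every relevant dimension, e.g. the entrywise ReLU) that is $1$-Lipschitz with respect to the Euclidean norm and satisfies $\phi(0)=0$, and let $\phi_o$ be either the identity map or the soft-max function on $\mathbb R^{\delta_d}$. For $w=(\mathbf W_1,\dots,\mathbf W_d)$ define $h_w:\mathcal X\to\mathbb R^{\delta_d}$ by $h_w(x)=\phi_o(\mathbf W_d\,\phi(\mathbf W_{d-1}\cdots\phi(\mathbf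 W_1x)\cdots))$. Let $M=\prod_{j=1}^d\|M_j\|_2$. *)

theory Defs
  imports Complex_Main "Jordan_Normal_Form.Matrix"
begin

definition vnorm :: "real vec \<Rightarrow> real" where
  "vnorm v = sqrt (v \<bullet> v)"

definition snorm :: "real mat \<Rightarrow> real" where
  "snorm A = Sup {vnorm (A *\<^sub>v x) | x. x \<in> carrier_vec (dim_col A) \<and> vnorm x \<le> 1}"

definition softmax :: "real vec \<Rightarrow> real vec" where
  "softmax v = vec (dim_vec v) (\<lambda>i. exp (v $ i) / (\<Sum>j<dim_vec v. exp (v $ j)))"

fun hidden :: "(real vec \<Rightarrow> real vec) \<Rightarrow> (nat \<Rightarrow> real mat) \<Rightarrow> nat \<Rightarrow> real vec \<Rightarrow> real vec" where
  "hidden phi w 0 x = x"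
| "hidden phi w (Suc j) x = phi (w (Suc j) *\<^sub>v hidden phi w j x)"

text \<open>The network h_w(x) = phi_o (W_d phi(W_{d-1} ... phi(W_1 x))); weights w j for j = 1..d.\<close>
definition net :: "(real vec \<Rightarrow> real vec) \<Rightarrow> (real vec \<Rightarrow> real vec) \<Rightarrow> nat \<Rightarrow> (nat \<Rightarrow> real mat) \<Rightarrow> real vec \<Rightarrow> real vec" where
  "net phi phio d w x = phio (w d *\<^sub>v hidden phi w (d - 1) x)"

end

theory Submission
  imports Defs "HOL-Analysis.L2_Norm"
begin

text \<open>
  Both weight tuples produce the same hidden vector h after layer k - 1. Since every
  activation is 1-Lipschitz, changing only the weight of layer k moves the output by at most
  ||W_k - M_k|| * ||M_(k+1)|| * ... * ||M_d|| * |h|. Because the hidden activation also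
  fixes 0, |h| <= ||W_1|| * ... * ||W_(k-1)|| * |x|, and ||W_i|| <= (1 + alpha_i) ||M_i||
  together with prod (1 + alpha_i) <= exp (sum alpha_i) gives the bound.

  The one non-routine ingredient is that soft-max is 1-Lipschitz. Along the segment
  b + t (a - b), the derivative of the inner product of a fixed vector c with the soft-max
  is a covariance under the soft-max weights, which Cauchy-Schwarz bounds by |c| |a - b|;
  for c = softmax a - softmax b the mean value theorem then gives |c|^2 <= |c| |a - b|.
\<close>

lemma vnorm_eq_L2_set: "vnorm v = L2_set (\<lambda>i. v $ i) {..<dim_vec v}"
  unfolding vnorm_def L2_set_def scalar_prod_def
  by (simp add: power2_eq_square lessThan_atLeast0)

lemma vnorm_nonneg: "0 \<le> vnorm v"
  unfolding vnorm_eq_L2_set by simp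

lemma vnorm_zero_vec [simp]: "vnorm (0\<^sub>v n) = 0"
  unfolding vnorm_def by simp

lemma vnorm_eq_0_iff: "vnorm v = 0 \<longleftrightarrow> v = 0\<^sub>v (dim_vec v)"
proof
  assume "vnorm v = 0"
  then show "v = 0\<^sub>v (dim_vec v)"
    unfolding vnorm_eq_L2_set by (intro eq_vecI) (auto simp: L2_set_eq_0_iff)
next
  assume "v = 0\<^sub>v (dim_vec v)"
  then have "vnorm v = vnorm (0\<^sub>v (dim_vec v))" by (rule arg_cong)
  then show "vnorm v = 0" by simp
qed

lemma vnorm_smult: "vnorm (k \<cdot>\<^sub>v v) = \<bar>k\<bar> * vnorm v"
proof -
  have v: "v \<in> carrier_vec (dim_vec v)" by (rule carrier_vec_dim_vec)
  have kv: "k \<cdot>\<^sub>v v \<in> carrier_vec (dim_vec v)" by (rule carrier_vecI) simp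
  have "(k \<cdot>\<^sub>v v) \<bullet> (k \<cdot>\<^sub>v v) = k * (v \<bullet> (k \<cdot>\<^sub>v v))"
    by (rule smult_scalar_prod_distrib[OF v kv])
  also have "v \<bullet> (k \<cdot>\<^sub>v v) = k * (v \<bullet> v)"
    by (rule scalar_prod_smult_distrib[OF v v])
  finally have "(k \<cdot>\<^sub>v v) \<bullet> (k \<cdot>\<^sub>v v) = (k * k) * (v \<bullet> v)"
    by (simp only: mult.assoc)
  then show ?thesis unfolding vnorm_def by (simp only: real_sqrt_mult real_sqrt_mult_self)
qed

lemma vnorm_le_diff_add:
  assumes "dim_vec a = dim_vec b"
  shows "vnorm a \<le> vnorm (a - b) + vnorm b"
proof -
  have "vnorm a = L2_set (\<lambda>i. (a - b) $ i + b $ i) {..<dim_vec b}"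
    unfolding vnorm_eq_L2_set using assms by (intro L2_set_cong) auto
  also have "\<dots> \<le> vnorm (a - b) + vnorm b"
    unfolding vnorm_eq_L2_set using L2_set_triangle_ineq by simp
  finally show ?thesis .
qed

lemma bdd_above_snorm_set:
  "bdd_above {vnorm (A *\<^sub>v x) | x. x \<in> carrier_vec (dim_col A) \<and> vnorm x \<le> 1}"
proof (rule bdd_aboveI)
  let ?c = "dim_col A" and ?r = "dim_row A"
  fix y assume "y \<in> {vnorm (A *\<^sub>v x) | x. x \<in> carrier_vec ?c \<and> vnorm x \<le> 1}"
  then obtain x where x: "x \<in> carrier_vec ?c" "vnorm x \<le> 1" and y: "y = vnorm (A *\<^sub>v x)"
    by auto
  have "y \<le> (\<Sum>i<?r. \<bar>(A *\<^sub>v x) $ i\<bar>)"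
    unfolding y vnorm_eq_L2_set using L2_set_le_sum_abs[of "\<lambda>i. (A *\<^sub>v x) $ i" "{..<?r}"]
    by (simp del: index_mult_mat_vec)
  also have "\<dots> \<le> (\<Sum>i<?r. L2_set (\<lambda>j. row A i $ j) {..<?c})"
  proof (rule sum_mono)
    fix i assume i: "i \<in> {..<?r}"
    have "\<bar>(A *\<^sub>v x) $ i\<bar> = \<bar>\<Sum>j<?c. row A i $ j * x $ j\<bar>"
      using i x by (simp add: scalar_prod_def lessThan_atLeast0)
    also have "\<dots> \<le> (\<Sum>j<?c. \<bar>row A i $ j\<bar> * \<bar>x $ j\<bar>)"
      by (rule order_trans[OF sum_abs]) (simp add: abs_mult)
    also have "\<dots> \<le> L2_set (\<lambda>j. row A i $ j) {..<?c} * L2_set (\<lambda>j. x $ j) {..<?c}"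
      by (rule L2_set_mult_ineq)
    also have "\<dots> \<le> L2_set (\<lambda>j. row A i $ j) {..<?c}"
      using x unfolding vnorm_eq_L2_set by (simp add: mult_left_le)
    finally show "\<bar>(A *\<^sub>v x) $ i\<bar> \<le> L2_set (\<lambda>j. row A i $ j) {..<?c}" .
  qed
  finally show "y \<le> (\<Sum>i<?r. L2_set (\<lambda>j. row A i $ j) {..<?c})" .
qed

lemma vnorm_mult_mat_vec_le_snorm:
  assumes "x \<in> carrier_vec (dim_col A)" "vnorm x \<le> 1"
  shows "vnorm (A *\<^sub>v x) \<le> snorm A"
  unfolding snorm_def using assms by (intro cSup_upper bdd_above_snorm_set) auto

lemma snorm_nonneg: "0 \<le> snorm A"
  by (rule order_trans[OF vnorm_nonneg vnorm_mult_mat_vec_le_snorm[of "0\<^sub>v (dim_col A)"]]) auto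

lemma vnorm_mult_mat_vec_le:
  assumes A: "A \<in> carrier_mat r c" and v: "v \<in> carrier_vec c"
  shows "vnorm (A *\<^sub>v v) \<le> snorm A * vnorm v"
proof (cases "vnorm v = 0")
  case True
  then have "A *\<^sub>v v = 0\<^sub>v r"
    using A v by (intro eq_vecI) (auto simp: vnorm_eq_0_iff)
  then show ?thesis using True by (simp add: vnorm_def)
next
  case False
  define s where "s = vnorm v"
  have s: "s > 0" using False vnorm_nonneg[of v] unfolding s_def by auto
  have "vnorm (A *\<^sub>v ((1 / s) \<cdot>\<^sub>v v)) \<le> snorm A"
    using A v s by (intro vnorm_mult_mat_vec_le_snorm) (auto simp: vnorm_smult s_def)
  moreover have "A *\<^sub>v ((1 / s) \<cdot>\<^sub>v v) = (1 / s) \<cdot>\<^sub>v (A *\<^sub>v v)" by (rule mult_mat_vec[OF A v])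
  ultimately show ?thesis using s unfolding s_def[symmetric] by (simp add: vnorm_smult field_simps)
qed

lemma snorm_leI:
  assumes "0 \<le> C" and "\<And>v. v \<in> carrier_vec (dim_col A) \<Longrightarrow> vnorm (A *\<^sub>v v) \<le> C * vnorm v"
  shows "snorm A \<le> C"
  unfolding snorm_def
proof (rule cSup_least)
  show "{vnorm (A *\<^sub>v x) | x. x \<in> carrier_vec (dim_col A) \<and> vnorm x \<le> 1} \<noteq> {}"
    by (auto intro!: exI[of _ "0\<^sub>v (dim_col A)"])
qed (use assms in \<open>force intro: order_trans mult_left_le\<close>)

lemma snorm_le_snorm_diff_add:
  assumes A: "A \<in> carrier_mat r c" and B: "B \<in> carrier_mat r c"
  shows "snorm A \<le> snorm (A - B) + snorm B"
proof (rule snorm_leI)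
  fix v :: "real vec"
  assume "v \<in> carrier_vec (dim_col A)"
  then have v: "v \<in> carrier_vec c" using A by simp
  have "vnorm (A *\<^sub>v v) \<le> vnorm (A *\<^sub>v v - B *\<^sub>v v) + vnorm (B *\<^sub>v v)"
    using A B by (intro vnorm_le_diff_add) simp
  also have "A *\<^sub>v v - B *\<^sub>v v = (A - B) *\<^sub>v v"
    using minus_mult_distrib_mat_vec[OF A B v] by simp
  also have "vnorm ((A - B) *\<^sub>v v) + vnorm (B *\<^sub>v v) \<le> (snorm (A - B) + snorm B) * vnorm v"
    using vnorm_mult_mat_vec_le[OF minus_carrier_mat[OF B] v, of A]
      vnorm_mult_mat_vec_le[OF B v] by (simp add: distrib_right)
  finally show "vnorm (A *\<^sub>v v) \<le> (snorm (A - B) + snorm B) * vnorm v" .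
qed (intro add_nonneg_nonneg snorm_nonneg)

definition nonexpansive :: "(real vec \<Rightarrow> real vec) \<Rightarrow> bool" where
  "nonexpansive f \<longleftrightarrow> (\<forall>u v. dim_vec u = dim_vec v \<longrightarrow> vnorm (f u - f v) \<le> vnorm (u - v))"

lemma nonexpansiveD:
  "nonexpansive f \<Longrightarrow> dim_vec u = dim_vec v \<Longrightarrow> vnorm (f u - f v) \<le> vnorm (u - v)"
  unfolding nonexpansive_def by blast

lemma nonexpansive_id: "nonexpansive id"
  unfolding nonexpansive_def by simp

lemma vnorm_le_if_nonexpansive:
  assumes "nonexpansive f" "\<And>v. dim_vec (f v) = dim_vec v" "\<And>n. f (0\<^sub>v n) = 0\<^sub>v n"
  shows "vnorm (f u) \<le> vnorm u"
proof -
  have fu: "f u \<in> carrier_vec (dim_vec u)" by (rule carrier_vecI) (rule assms(2))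
  have "vnorm (f u - f (0\<^sub>v (dim_vec u))) \<le> vnorm (u - 0\<^sub>v (dim_vec u))"
    by (rule nonexpansiveD[OF assms(1)]) simp
  then show ?thesis
    unfolding assms(3) minus_zero_vec[OF fu] minus_zero_vec[OF carrier_vec_dim_vec] .
qed

lemma vnorm_nonexpansive_layer_le:
  assumes f: "nonexpansive f" and A: "A \<in> carrier_mat r c"
    and u: "u \<in> carrier_vec c" and v: "v \<in> carrier_vec c"
  shows "vnorm (f (A *\<^sub>v u) - f (A *\<^sub>v v)) \<le> snorm A * vnorm (u - v)"
proof -
  have "vnorm (f (A *\<^sub>v u) - f (A *\<^sub>v v)) \<le> vnorm (A *\<^sub>v u - A *\<^sub>v v)"
    using A by (intro nonexpansiveD[OF f]) simp
  also have "A *\<^sub>v u - A *\<^sub>v v = A *\<^sub>v (u - v)"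
    by (rule mult_minus_distrib_mat_vec[OF A u v, symmetric])
  also have "vnorm (A *\<^sub>v (u - v)) \<le> snorm A * vnorm (u - v)"
    using u v by (intro vnorm_mult_mat_vec_le[OF A]) simp
  finally show ?thesis .
qed

lemma vnorm_nonexpansive_layer_weight_le:
  assumes f: "nonexpansive f" and A: "A \<in> carrier_mat r c" and B: "B \<in> carrier_mat r c"
    and v: "v \<in> carrier_vec c"
  shows "vnorm (f (A *\<^sub>v v) - f (B *\<^sub>v v)) \<le> snorm (A - B) * vnorm v"
proof -
  have "vnorm (f (A *\<^sub>v v) - f (B *\<^sub>v v)) \<le> vnorm (A *\<^sub>v v - B *\<^sub>v v)"
    using A B by (intro nonexpansiveD[OF f]) simp
  also have "A *\<^sub>v v - B *\<^sub>v v = (A - B) *\<^sub>v v"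
    by (rule minus_mult_distrib_mat_vec[OF A B v, symmetric])
  also have "vnorm ((A - B) *\<^sub>v v) \<le> snorm (A - B) * vnorm v"
    by (rule vnorm_mult_mat_vec_le[OF minus_carrier_mat[OF B] v])
  finally show ?thesis .
qed

lemma weighted_variance_eq:
  fixes p h :: "'a \<Rightarrow> real"
  assumes "sum p A = 1"
  shows "(\<Sum>i\<in>A. p i * (h i - (\<Sum>j\<in>A. p j * h j))\<^sup>2)
       = (\<Sum>i\<in>A. p i * (h i)\<^sup>2) - (\<Sum>j\<in>A. p j * h j)\<^sup>2"
proof -
  define hbar where "hbar = (\<Sum>j\<in>A. p j * h j)"
  have "(\<Sum>i\<in>A. p i * (h i - hbar)\<^sup>2)
      = (\<Sum>i\<in>A. p i * (h i)\<^sup>2 - 2 * hbar * (p i * h i) + hbar\<^sup>2 * p i)"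
    by (intro sum.cong) (simp_all add: power2_eq_square algebra_simps)
  also have "\<dots> = (\<Sum>i\<in>A. p i * (h i)\<^sup>2) - 2 * hbar * hbar + hbar\<^sup>2 * sum p A"
    unfolding sum.distrib sum_subtractf sum_distrib_left[symmetric] hbar_def ..
  finally show ?thesis using assms unfolding hbar_def by (simp add: power2_eq_square)
qed

lemma covariance_le_L2_set:
  fixes p c h :: "'a \<Rightarrow> real"
  assumes A: "finite A" and p_nonneg: "\<And>i. i \<in> A \<Longrightarrow> 0 \<le> p i" and p_sum: "sum p A = 1"
  shows "(\<Sum>i\<in>A. c i * (p i * (h i - (\<Sum>j\<in>A. p j * h j)))) \<le> L2_set c A * L2_set h A"
proof -
  define hbar where "hbar = (\<Sum>j\<in>A. p j * h j)"
  have p_le_1: "p i \<le> 1" if "i \<in> A" for i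
    using member_le_sum[of i A p] p_nonneg A that p_sum by auto
  have "(\<Sum>i\<in>A. c i * (p i * (h i - hbar)))
      = (\<Sum>i\<in>A. (sqrt (p i) * c i) * (sqrt (p i) * (h i - hbar)))"
    using p_nonneg by (intro sum.cong) (simp_all add: algebra_simps)
  also have "\<dots> \<le> L2_set (\<lambda>i. sqrt (p i) * c i) A * L2_set (\<lambda>i. sqrt (p i) * (h i - hbar)) A"
    by (rule order_trans[OF sum_mono L2_set_mult_ineq]) (metis abs_ge_self abs_mult)
  also have "\<dots> \<le> L2_set c A * L2_set h A"
  proof (intro mult_mono L2_set_nonneg)
    have "(\<Sum>i\<in>A. (sqrt (p i) * c i)\<^sup>2) = (\<Sum>i\<in>A. p i * (c i)\<^sup>2)"
      using p_nonneg by (intro sum.cong) (simp_all add: power_mult_distrib)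
    also have "\<dots> \<le> (\<Sum>i\<in>A. (c i)\<^sup>2)"
      by (intro sum_mono mult_left_le_one_le) (simp_all add: p_nonneg p_le_1)
    finally show "L2_set (\<lambda>i. sqrt (p i) * c i) A \<le> L2_set c A"
      unfolding L2_set_def by simp
    have "(\<Sum>i\<in>A. (sqrt (p i) * (h i - hbar))\<^sup>2) = (\<Sum>i\<in>A. p i * (h i - hbar)\<^sup>2)"
      using p_nonneg by (intro sum.cong) (simp_all add: power_mult_distrib)
    also have "\<dots> \<le> (\<Sum>i\<in>A. p i * (h i)\<^sup>2)"
      unfolding hbar_def weighted_variance_eq[OF p_sum] by simp
    also have "\<dots> \<le> (\<Sum>i\<in>A. (h i)\<^sup>2)"
      by (intro sum_mono mult_left_le_one_le) (simp_all add: p_nonneg p_le_1)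
    finally show "L2_set (\<lambda>i. sqrt (p i) * (h i - hbar)) A \<le> L2_set h A"
      unfolding L2_set_def by simp
  qed
  finally show ?thesis unfolding hbar_def .
qed

definition softmax_weight :: "(nat \<Rightarrow> real) \<Rightarrow> nat set \<Rightarrow> nat \<Rightarrow> real" where
  "softmax_weight a A i = exp (a i) / (\<Sum>j\<in>A. exp (a j))"

lemma softmax_weight_nonneg: "0 \<le> softmax_weight a A i"
  unfolding softmax_weight_def by (simp add: sum_nonneg)

lemma sum_softmax_weight:
  assumes "finite A" "A \<noteq> {}"
  shows "(\<Sum>i\<in>A. softmax_weight a A i) = 1"
proof -
  have "(\<Sum>j\<in>A. exp (a j)) > 0" using assms by (intro sum_pos) auto
  then show ?thesis unfolding softmax_weight_def by (simp add: sum_divide_distrib[symmetric])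
qed

lemma has_real_derivative_softmax_weight:
  fixes b h :: "nat \<Rightarrow> real"
  assumes "finite A" "A \<noteq> {}"
  defines "p \<equiv> \<lambda>t. softmax_weight (\<lambda>j. b j + t * h j) A"
  shows "((\<lambda>t. p t i) has_real_derivative p t i * (h i - (\<Sum>j\<in>A. p t j * h j))) (at t)"
proof -
  define e where "e t j = exp (b j + t * h j)" for t j
  define S where "S t = (\<Sum>j\<in>A. e t j)" for t
  define E where "E t = (\<Sum>j\<in>A. e t j * h j)" for t
  have S_pos: "S t > 0" unfolding S_def e_def using assms by (intro sum_pos) auto
  have "(S has_real_derivative E t) (at t)"
    unfolding S_def E_def e_def by (auto intro!: derivative_eq_intros)
  then have "((\<lambda>t. e t i / S t) has_real_derivative
      (h i * e t i * S t - E t * e t i) / (S t * S t)) (at t)"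
    using S_pos unfolding e_def by (auto intro!: derivative_eq_intros)
  moreover have "(h i * e t i * S t - E t * e t i) / (S t * S t) = e t i / S t * (h i - E t / S t)"
    using S_pos by (simp add: field_simps)
  moreover have "(\<Sum>j\<in>A. p t j * h j) = E t / S t"
    unfolding p_def softmax_weight_def E_def sum_divide_distrib by (simp add: e_def S_def)
  ultimately show ?thesis
    unfolding p_def softmax_weight_def by (simp add: e_def S_def)
qed

lemma L2_set_softmax_weight_diff_le:
  assumes A: "finite A"
  shows "L2_set (\<lambda>i. softmax_weight a A i - softmax_weight b A i) A \<le> L2_set (\<lambda>i. a i - b i) A"
proof (cases "A = {}")
  case False
  define h where "h i = a i - b i" for i
  define c where "c i = softmax_weight a A i - softmax_weight b A i" for i
  define p where "p t = softmax_weight (\<lambda>j. b j + t * h j) A" for t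
  define f where "f t = (\<Sum>i\<in>A. c i * p t i)" for t
  define f' where "f' t = (\<Sum>i\<in>A. c i * (p t i * (h i - (\<Sum>j\<in>A. p t j * h j))))" for t
  have "(f has_real_derivative f' t) (at t)" for t
    unfolding f_def f'_def p_def
    by (intro DERIV_sum DERIV_cmult has_real_derivative_softmax_weight A False)
  then obtain z where "f 1 - f 0 = f' z"
    using MVT2[of 0 1 f f'] by auto
  also have "\<dots> \<le> L2_set c A * L2_set h A"
    unfolding f'_def p_def
    by (intro covariance_le_L2_set A softmax_weight_nonneg sum_softmax_weight False)
  finally have "f 1 - f 0 \<le> L2_set c A * L2_set h A" .
  moreover have "f 1 - f 0 = (L2_set c A)\<^sup>2"
  proof -
    have "p 1 = softmax_weight a A" "p 0 = softmax_weight b A"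
      unfolding p_def h_def by simp_all
    then have "f 1 - f 0 = (\<Sum>i\<in>A. (c i)\<^sup>2)"
      unfolding f_def by (simp add: sum_subtractf[symmetric] c_def power2_eq_square algebra_simps)
    then show ?thesis by (simp add: L2_set_def sum_nonneg)
  qed
  ultimately have "L2_set c A * L2_set c A \<le> L2_set c A * L2_set h A"
    by (simp add: power2_eq_square)
  then have "L2_set c A \<le> L2_set h A"
    by (metis L2_set_nonneg mult_le_cancel_left_pos order.order_iff_strict order_trans)
  then show ?thesis unfolding c_def h_def .
qed simp

lemma nonexpansive_softmax: "nonexpansive softmax"
  unfolding nonexpansive_def
proof (intro allI impI)
  fix u v :: "real vec"
  assume dim: "dim_vec u = dim_vec v"
  let ?A = "{..<dim_vec v}"
  have "vnorm (softmax u - softmax v)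
      = L2_set (\<lambda>i. softmax_weight (\<lambda>j. u $ j) ?A i - softmax_weight (\<lambda>j. v $ j) ?A i) ?A"
    unfolding vnorm_eq_L2_set using dim
    by (intro L2_set_cong) (auto simp: softmax_def softmax_weight_def)
  also have "\<dots> \<le> L2_set (\<lambda>i. u $ i - v $ i) ?A"
    by (rule L2_set_softmax_weight_diff_le) simp
  also have "\<dots> = vnorm (u - v)"
    unfolding vnorm_eq_L2_set using dim by (intro L2_set_cong) auto
  finally show "vnorm (softmax u - softmax v) \<le> vnorm (u - v)" .
qed

lemma hidden_carrier:
  assumes "\<And>v. dim_vec (phi v) = dim_vec v"
    and "\<And>i. 1 \<le> i \<Longrightarrow> i \<le> j \<Longrightarrow> w i \<in> carrier_mat (\<delta> i) (\<delta> (i - 1))"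
    and "x \<in> carrier_vec (\<delta> 0)"
  shows "hidden phi w j x \<in> carrier_vec (\<delta> j)"
  using assms(2)
proof (induction j)
  case (Suc j)
  have "w (Suc j) \<in> carrier_mat (\<delta> (Suc j)) (\<delta> j)" using Suc.prems[of "Suc j"] by simp
  then show ?case by (intro carrier_vecI) (simp add: assms(1))
qed (use assms(3) in simp)

lemma hidden_cong:
  assumes "\<And>i. 1 \<le> i \<Longrightarrow> i \<le> j \<Longrightarrow> w i = w' i"
  shows "hidden phi w j x = hidden phi w' j x"
  using assms by (induction j) auto

lemma vnorm_hidden_le:
  assumes phi: "nonexpansive phi" "\<And>v. dim_vec (phi v) = dim_vec v" "\<And>n. phi (0\<^sub>v n) = 0\<^sub>v n"
    and w: "\<And>i. 1 \<le> i \<Longrightarrow> i \<le> j \<Longrightarrow> w i \<in> carrier_mat (\<delta> i) (\<delta> (i - 1))"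
    and x: "x \<in> carrier_vec (\<delta> 0)"
  shows "vnorm (hidden phi w j x) \<le> (\<Prod>i=1..j. snorm (w i)) * vnorm x"
  using w
proof (induction j)
  case (Suc j)
  have "vnorm (hidden phi w (Suc j) x) \<le> vnorm (w (Suc j) *\<^sub>v hidden phi w j x)"
    using vnorm_le_if_nonexpansive[OF phi] by simp
  also have "\<dots> \<le> snorm (w (Suc j)) * vnorm (hidden phi w j x)"
  proof (rule vnorm_mult_mat_vec_le)
    show "w (Suc j) \<in> carrier_mat (\<delta> (Suc j)) (\<delta> j)" using Suc.prems[of "Suc j"] by simp
    show "hidden phi w j x \<in> carrier_vec (\<delta> j)"
      using Suc.prems by (intro hidden_carrier[where \<delta>=\<delta>] phi(2) x) auto
  qed
  also have "\<dots> \<le> snorm (w (Suc j)) * ((\<Prod>i=1..j. snorm (w i)) * vnorm x)"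
    using Suc by (intro mult_left_mono snorm_nonneg) auto
  finally show ?case by (simp add: prod.cl_ivl_Suc mult_ac)
qed simp

lemma vnorm_hidden_le_perturbed:
  assumes phi: "nonexpansive phi" "\<And>v. dim_vec (phi v) = dim_vec v" "\<And>n. phi (0\<^sub>v n) = 0\<^sub>v n"
    and w: "\<And>i. 1 \<le> i \<Longrightarrow> i \<le> j \<Longrightarrow> w i \<in> carrier_mat (\<delta> i) (\<delta> (i - 1))"
    and M: "\<And>i. 1 \<le> i \<Longrightarrow> i \<le> j \<Longrightarrow> M i \<in> carrier_mat (\<delta> i) (\<delta> (i - 1))"
    and close: "\<And>i. 1 \<le> i \<Longrightarrow> i \<le> j \<Longrightarrow> snorm (w i - M i) \<le> \<alpha> i * snorm (M i)"
    and x: "x \<in> carrier_vec (\<delta> 0)"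
  shows "vnorm (hidden phi w j x) \<le> (\<Prod>i=1..j. 1 + \<alpha> i) * (\<Prod>i=1..j. snorm (M i)) * vnorm x"
proof -
  have "vnorm (hidden phi w j x) \<le> (\<Prod>i=1..j. snorm (w i)) * vnorm x"
    using w by (intro vnorm_hidden_le[where \<delta>=\<delta>] phi x)
  also have "\<dots> \<le> (\<Prod>i=1..j. (1 + \<alpha> i) * snorm (M i)) * vnorm x"
  proof (intro mult_right_mono prod_mono conjI snorm_nonneg vnorm_nonneg)
    fix i assume "i \<in> {1..j}"
    then have i: "1 \<le> i" "i \<le> j" by auto
    have "snorm (w i) \<le> snorm (w i - M i) + snorm (M i)"
      by (rule snorm_le_snorm_diff_add[OF w[OF i] M[OF i]])
    then show "snorm (w i) \<le> (1 + \<alpha> i) * snorm (M i)"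
      using close[OF i] by (simp add: algebra_simps)
  qed
  finally show ?thesis by (simp add: prod.distrib)
qed

lemma vnorm_perturbed_layer_le:
  assumes phi: "nonexpansive phi" "\<And>v. dim_vec (phi v) = dim_vec v"
    and psi: "nonexpansive psi"
    and w: "\<And>i. 1 \<le> i \<Longrightarrow> i \<le> Suc j \<Longrightarrow> w i \<in> carrier_mat (\<delta> i) (\<delta> (i - 1))"
    and w': "\<And>i. 1 \<le> i \<Longrightarrow> i \<le> Suc j \<Longrightarrow> w' i \<in> carrier_mat (\<delta> i) (\<delta> (i - 1))"
    and agree: "\<And>i. i \<noteq> k \<Longrightarrow> w i = w' i"
    and k: "1 \<le> k" "k \<le> Suc j"
    and x: "x \<in> carrier_vec (\<delta> 0)"
  shows "vnorm (psi (w (Suc j) *\<^sub>v hidden phi w j x) - psi (w' (Suc j) *\<^sub>v hidden phi w' j x))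
         \<le> snorm (w k - w' k) * (\<Prod>i=Suc k..Suc j. snorm (w i)) * vnorm (hidden phi w (k - 1) x)"
proof -
  let ?h = "hidden phi w" and ?h' = "hidden phi w'"
  have below_k: "?h (k - 1) x = ?h' (k - 1) x"
    using agree k by (intro hidden_cong) auto
  have "?h (k - 1) x \<in> carrier_vec (\<delta> (k - 1))"
    using w k by (intro hidden_carrier[where \<delta>=\<delta>] phi(2) x) auto
  then have layer_k: "vnorm (psi' (w k *\<^sub>v ?h (k - 1) x) - psi' (w' k *\<^sub>v ?h' (k - 1) x))
      \<le> snorm (w k - w' k) * vnorm (?h (k - 1) x)" if "nonexpansive psi'" for psi'
    unfolding below_k[symmetric] using w[of k] w'[of k] k
    by (intro vnorm_nonexpansive_layer_weight_le[OF that]) auto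
  txt \<open>The outer activation is generalized: the claim is for the output activation, but the
    induction hypothesis is needed for the hidden activation phi.\<close>
  show ?thesis
    using w w' k psi
  proof (induction j arbitrary: psi)
    case 0
    then show ?case using layer_k[OF "0.prems"(5)] by simp
  next
    case (Suc j)
    show ?case
    proof (cases "k = Suc (Suc j)")
      case True
      then show ?thesis using layer_k[OF Suc.prems(5)] by simp
    next
      case False
      let ?A = "w (Suc (Suc j))"
      have A: "?A \<in> carrier_mat (\<delta> (Suc (Suc j))) (\<delta> (Suc j))" "w' (Suc (Suc j)) = ?A"
        using Suc.prems(1)[of "Suc (Suc j)"] agree[of "Suc (Suc j)"] False by auto
      have "?h (Suc j) x \<in> carrier_vec (\<delta> (Suc j))"
        by (rule hidden_carrier[where \<delta>=\<delta>, OF phi(2)]) (use Suc.prems(1) x in auto)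
      moreover have "?h' (Suc j) x \<in> carrier_vec (\<delta> (Suc j))"
        by (rule hidden_carrier[where \<delta>=\<delta>, OF phi(2)]) (use Suc.prems(2) x in auto)
      ultimately have "vnorm (psi (?A *\<^sub>v ?h (Suc j) x) - psi (?A *\<^sub>v ?h' (Suc j) x))
          \<le> snorm ?A * vnorm (?h (Suc j) x - ?h' (Suc j) x)"
        by (intro vnorm_nonexpansive_layer_le[OF Suc.prems(5) A(1)])
      also have "\<dots> \<le> snorm ?A *
          (snorm (w k - w' k) * (\<Prod>i=Suc k..Suc j. snorm (w i)) * vnorm (?h (k - 1) x))"
      proof (rule mult_left_mono[OF _ snorm_nonneg])
        show "vnorm (?h (Suc j) x - ?h' (Suc j) x)
            \<le> snorm (w k - w' k) * (\<Prod>i=Suc k..Suc j. snorm (w i)) * vnorm (?h (k - 1) x)"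
          unfolding hidden.simps by (rule Suc.IH) (use Suc.prems False phi(1) in auto)
      qed
      also have "\<dots> = snorm (w k - w' k) * (\<Prod>i=Suc k..Suc (Suc j). snorm (w i)) * vnorm (?h (k - 1) x)"
        using False Suc.prems(4) by (simp add: prod.nat_ivl_Suc')
      finally show ?thesis by (simp only: A(2))
    qed
  qed
qed

lemma vnorm_net_perturbed_le:
  assumes "nonexpansive phi" "\<And>v. dim_vec (phi v) = dim_vec v" "nonexpansive phio"
    and "\<And>i. 1 \<le> i \<Longrightarrow> i \<le> d \<Longrightarrow> w i \<in> carrier_mat (\<delta> i) (\<delta> (i - 1))"
    and "\<And>i. 1 \<le> i \<Longrightarrow> i \<le> d \<Longrightarrow> w' i \<in> carrier_mat (\<delta> i) (\<delta> (i - 1))"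
    and "\<And>i. i \<noteq> k \<Longrightarrow> w i = w' i"
    and "1 \<le> k" "k \<le> d"
    and "x \<in> carrier_vec (\<delta> 0)"
  shows "vnorm (net phi phio d w x - net phi phio d w' x)
         \<le> snorm (w k - w' k) * (\<Prod>i=Suc k..d. snorm (w i)) * vnorm (hidden phi w (k - 1) x)"
proof -
  obtain j where "d = Suc j" using assms(7,8) by (cases d) auto
  then show ?thesis
    unfolding net_def using vnorm_perturbed_layer_le[of phi phio j w \<delta> w' k x] assms by simp
qed

lemma prod_split_nat:
  fixes f :: "nat \<Rightarrow> 'a::comm_monoid_mult"
  assumes "m \<le> k" "k \<le> n"
  shows "prod f {m..n} = prod f {m..<k} * f k * prod f {Suc k..n}"
proof -
  have "{m..n} = {m..<k} \<union> {k..n}" using assms by auto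
  then have "prod f {m..n} = prod f {m..<k} * prod f {k..n}"
    by (simp add: prod.union_disjoint ivl_disj_int)
  also have "prod f {k..n} = f k * prod f {Suc k..n}"
    using assms(2) by (rule prod.atLeast_Suc_atMost)
  finally show ?thesis by (simp add: mult.assoc)
qed

lemma prod_one_plus_le_exp_sum:
  fixes a :: "'a \<Rightarrow> real"
  assumes "\<And>i. i \<in> A \<Longrightarrow> 0 \<le> a i"
  shows "(\<Prod>i\<in>A. 1 + a i) \<le> exp (\<Sum>i\<in>A. a i)"
proof (cases "finite A")
  case True
  then show ?thesis
    unfolding exp_sum[OF True] using assms by (intro prod_mono) (auto simp: add.commute)
qed simp

theorem lemma1:
  fixes m d k :: nat and \<delta> :: "nat \<Rightarrow> nat" and R :: real
    and M W :: "nat \<Rightarrow> real mat" and \<alpha> :: "nat \<Rightarrow> real"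
    and \<phi> \<phi>o :: "real vec \<Rightarrow> real vec" and x :: "real vec"
  assumes m_pos: "m > 0"
    and delta0: "\<delta> 0 = m"
    and delta_pos: "\<And>j. 1 \<le> j \<Longrightarrow> j \<le> d \<Longrightarrow> \<delta> j > 0"
    and R_pos: "R > 0"
    and M_dim: "\<And>j. 1 \<le> j \<Longrightarrow> j \<le> d \<Longrightarrow> M j \<in> carrier_mat (\<delta> j) (\<delta> (j - 1))"
    and M_pos: "\<And>j. 1 \<le> j \<Longrightarrow> j \<le> d \<Longrightarrow> snorm (M j) > 0"
    and alpha_pos: "\<And>j. 1 \<le> j \<Longrightarrow> j \<le> d \<Longrightarrow> \<alpha> j > 0"
    and phi_dim: "\<And>v. dim_vec (\<phi> v) = dim_vec v"
    and phi_lip: "\<And>u v. dim_vec u = dim_vec v \<Longrightarrow> vnorm (\<phi> u - \<phi> v) \<le> vnorm (u - v)"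
    and phi_zero: "\<And>n. \<phi> (0\<^sub>v n) = 0\<^sub>v n"
    and phio: "\<phi>o = id \<or> \<phi>o = softmax"
    and d_ge: "d \<ge> 2"
    and k_range: "1 \<le> k" "k \<le> d"
    and W_dim: "\<And>i. 1 \<le> i \<Longrightarrow> i \<le> k \<Longrightarrow> W i \<in> carrier_mat (\<delta> i) (\<delta> (i - 1))"
    and W_ball: "\<And>i. 1 \<le> i \<Longrightarrow> i \<le> k \<Longrightarrow> snorm (W i - M i) \<le> \<alpha> i * snorm (M i)"
    and x_dim: "x \<in> carrier_vec m"
    and x_R: "vnorm x \<le> R"
  shows "vnorm (net \<phi> \<phi>o d (\<lambda>j. if j \<le> k then W j else M j) x
                - net \<phi> \<phi>o d (\<lambda>j. if j < k then W j else M j) x)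
         \<le> \<alpha> k * exp (\<Sum>i=1..k-1. \<alpha> i) * (\<Prod>j=1..d. snorm (M j)) * vnorm x"
proof -
  define w1 where "w1 = (\<lambda>j. if j \<le> k then W j else M j)"
  define w2 where "w2 = (\<lambda>j. if j < k then W j else M j)"
  let ?P = "\<lambda>A. \<Prod>i\<in>A. snorm (M i)"
  have x: "x \<in> carrier_vec (\<delta> 0)" using x_dim delta0 by simp
  have \<phi>: "nonexpansive \<phi>" using phi_lip unfolding nonexpansive_def by blast
  have \<phi>o: "nonexpansive \<phi>o" using phio nonexpansive_id nonexpansive_softmax by blast
  have alpha_nonneg: "0 \<le> \<alpha> i" if "1 \<le> i" "i \<le> k" for i
    using alpha_pos[of i] that k_range by simp
  have hidden_le: "vnorm (hidden \<phi> w1 (k - 1) x) \<le> (\<Prod>i=1..k-1. 1 + \<alpha> i) * ?P {1..k-1} * vnorm x"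
    using W_dim M_dim W_ball k_range
    by (intro vnorm_hidden_le_perturbed[where \<delta>=\<delta>] \<phi> phi_dim phi_zero x) (auto simp: w1_def)
  have "vnorm (net \<phi> \<phi>o d w1 x - net \<phi> \<phi>o d w2 x)
      \<le> snorm (W k - M k) * ?P {Suc k..d} * vnorm (hidden \<phi> w1 (k - 1) x)"
    using vnorm_net_perturbed_le[OF \<phi> phi_dim \<phi>o, of d w1 \<delta> w2 k x] W_dim M_dim k_range x
    by (auto simp: w1_def w2_def)
  also have "\<dots> \<le> (\<alpha> k * snorm (M k)) * ?P {Suc k..d} * ((\<Prod>i=1..k-1. 1 + \<alpha> i) * ?P {1..k-1} * vnorm x)"
    using W_ball[of k] hidden_le k_range alpha_nonneg
    by (intro mult_mono mult_nonneg_nonneg prod_nonneg snorm_nonneg vnorm_nonneg order.refl) auto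
  also have "\<dots> = \<alpha> k * (\<Prod>i=1..k-1. 1 + \<alpha> i) * ?P {1..d} * vnorm x"
  proof -
    have "{1..<k} = {1..k-1}" using k_range by auto
    then show ?thesis
      using prod_split_nat[of 1 k d "\<lambda>i. snorm (M i)"] k_range by (simp add: mult_ac)
  qed
  also have "\<dots> \<le> \<alpha> k * exp (\<Sum>i=1..k-1. \<alpha> i) * ?P {1..d} * vnorm x"
    using alpha_nonneg k_range
    by (intro mult_right_mono mult_left_mono prod_one_plus_le_exp_sum prod_nonneg vnorm_nonneg snorm_nonneg) auto
  finally show ?thesis unfolding w1_def w2_def .
qed

end
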